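(* Let $A\in M_n(\mathbb{FT})$ and let $G$ be a unit of $M_n(\mathbb{T})$ with $G\otimes A=A\otimes G$. Then $G$ has exactly one eigenvalue.
   Context: $\mathbb{FT}$ is $\mathbb{R}$ with $a\oplus b=\max(a,b)$, $a\otimes b=a+b$; $\mathbb{T}=\mathbb{R}\cup\{-\infty\}$ with the obvious extensions. $M_n(\mathbb{FT})\subseteq M_n(\mathbb{T})$ are the $n\times n$ matrices with entries in these, multiplied by $(A\otimes B)_{i,j}=\bigoplus_k A_{i,k}\otimes B_{k,j}$. $M_n(\mathbb{T})$ is a monoid (identity: $0$ on diagonal, $-\infty$ elsewhere); its units are the matrices with exactly one entry different from $-\infty$ in each row and each column. A real number $\lambda$ is an eigenvalue of $G\in M_n(\mathbb{T})$ if $G\otimes x=\lambda\otimes x$ (i.e. $(G\otimes x)_i=\lambda+x_i$ for all $i$) for some $x\in\mathbb{T}^n$ not all of whose entries are $-\infty$. *)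

theory Defs
  imports "HOL-Library.Extended_Real"
begin

text \<open>Tropical semiring T = R \<union> {-\<infinity>} is modelled inside ereal as the elements
  different from \<infinity>; FT = R is the finite ereals.\<close>

definition trop_elem :: "ereal \<Rightarrow> bool" where
  "trop_elem a \<longleftrightarrow> a \<noteq> \<infinity>"

definition trop_mat :: "('n::finite \<Rightarrow> 'n \<Rightarrow> ereal) \<Rightarrow> bool" where
  "trop_mat A \<longleftrightarrow> (\<forall>i j. trop_elem (A i j))"

definition ft_mat :: "('n::finite \<Rightarrow> 'n \<Rightarrow> ereal) \<Rightarrow> bool" where
  "ft_mat A \<longleftrightarrow> (\<forall>i j. A i j \<noteq> \<infinity> \<and> A i j \<noteq> -\<infinity>)"

definition trop_mult :: "('n::finite \<Rightarrow> 'n \<Rightarrow> ereal) \<Rightarrow> ('n \<Rightarrow> 'n \<Rightarrow> ereal) \<Rightarrow> ('n \<Rightarrow> 'n \<Rightarrow> ereal)" where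
  "trop_mult A B = (\<lambda>i j. Max (range (\<lambda>k. A i k + B k j)))"

definition trop_mult_vec :: "('n::finite \<Rightarrow> 'n \<Rightarrow> ereal) \<Rightarrow> ('n \<Rightarrow> ereal) \<Rightarrow> ('n \<Rightarrow> ereal)" where
  "trop_mult_vec A x = (\<lambda>i. Max (range (\<lambda>k. A i k + x k)))"

definition trop_id :: "'n::finite \<Rightarrow> 'n \<Rightarrow> ereal" where
  "trop_id = (\<lambda>i j. if i = j then 0 else -\<infinity>)"

definition trop_unit :: "('n::finite \<Rightarrow> 'n \<Rightarrow> ereal) \<Rightarrow> bool" where
  "trop_unit G \<longleftrightarrow> trop_mat G \<and>
     (\<exists>H. trop_mat H \<and> trop_mult G H = trop_id \<and> trop_mult H G = trop_id)"

definition trop_eigenvalue :: "('n::finite \<Rightarrow> 'n \<Rightarrow> ereal) \<Rightarrow> real \<Rightarrow> bool" where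
  "trop_eigenvalue G c \<longleftrightarrow> (\<exists>x. (\<forall>i. trop_elem (x i)) \<and> (\<exists>i. x i \<noteq> -\<infinity>) \<and>
     (\<forall>i. trop_mult_vec G x i = ereal c + x i))"

end

theory Submission
  imports Defs "HOL-Combinatorics.Cycles"
begin

text \<open>A tropical unit G is monomial: G i j = g i for j = \<sigma> i and -\<infinity> otherwise, with \<sigma> a
  permutation. The eigenvalues of such a matrix are the mean weights of the cycles of \<sigma>:
  following a finite coordinate of an eigenvector once around its cycle forces the eigenvalue,
  and averaging partial orbit sums over a period produces an eigenvector. Commutation with a
  finite matrix a gives g i + a (\<sigma> i) (\<sigma> j) = a i j + g j; summing along the orbits over a
  common period N of \<sigma> shows that all orbit sums of length N coincide, so all cycle means are
  equal.\<close>

lemma Max_range_eqI: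
  fixes f :: "'a::finite \<Rightarrow> 'b::linorder"
  assumes "f k = v" and "\<And>k'. f k' \<le> v"
  shows "Max (range f) = v"
  using assms by (intro Max_eqI) auto

lemma ereal_add_eq_minf_iff:
  fixes a b :: ereal
  assumes "a \<noteq> \<infinity>" and "b \<noteq> \<infinity>"
  shows "a + b = -\<infinity> \<longleftrightarrow> a = -\<infinity> \<or> b = -\<infinity>"
  using assms by (cases a; cases b) auto

lemma trop_mult_id_offdiag:
  assumes "trop_mat G" and "trop_mat H" and "trop_mult G H = trop_id" and "i \<noteq> j"
  shows "G i k = -\<infinity> \<or> H k j = -\<infinity>"
proof -
  have "G i k + H k j \<le> trop_mult G H i j"
    unfolding trop_mult_def by (rule Max_ge) auto
  then have "G i k + H k j = -\<infinity>"
    using assms(3,4) by (simp add: trop_id_def)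
  then show ?thesis
    using assms(1,2) by (simp add: ereal_add_eq_minf_iff trop_mat_def trop_elem_def)
qed

lemma trop_mult_id_diag:
  assumes "trop_mat G" and "trop_mat H" and "trop_mult G H = trop_id"
  obtains k where "G i k \<noteq> -\<infinity>" and "H k i \<noteq> -\<infinity>"
proof -
  have "trop_mult G H i i \<in> range (\<lambda>k. G i k + H k i)"
    unfolding trop_mult_def by (rule Max_in) auto
  moreover have "trop_mult G H i i = 0"
    using assms(3) by (simp add: trop_id_def)
  ultimately obtain k where "G i k + H k i = 0"
    by auto
  then have "G i k + H k i \<noteq> -\<infinity>"
    by simp
  then show thesis
    using assms(1,2) that by (auto simp add: ereal_add_eq_minf_iff trop_mat_def trop_elem_def)
qed

definition trop_monomial :: "('n \<Rightarrow> 'n) \<Rightarrow> ('n \<Rightarrow> real) \<Rightarrow> 'n \<Rightarrow> 'n \<Rightarrow> ereal" where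
  "trop_monomial \<sigma> g = (\<lambda>i j. if j = \<sigma> i then ereal (g i) else -\<infinity>)"

lemma trop_unit_monomial:
  assumes "trop_unit G"
  obtains \<sigma> g where "inj \<sigma>" and "G = trop_monomial \<sigma> g"
proof -
  obtain H where G: "trop_mat G" and H: "trop_mat H"
    and GH: "trop_mult G H = trop_id" and HG: "trop_mult H G = trop_id"
    using assms unfolding trop_unit_def by blast
  have "\<forall>i. \<exists>k. G i k \<noteq> -\<infinity> \<and> H k i \<noteq> -\<infinity>"
    using trop_mult_id_diag[OF G H GH] by blast
  then obtain \<sigma> where G\<sigma>: "\<And>i. G i (\<sigma> i) \<noteq> -\<infinity>" and H\<sigma>: "\<And>i. H (\<sigma> i) i \<noteq> -\<infinity>"
    by metis
  have support: "k = \<sigma> i" if "G i k \<noteq> -\<infinity>" for i k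
    using trop_mult_id_offdiag[OF H G HG, of "\<sigma> i" k i] H\<sigma>[of i] that by blast
  have "inj \<sigma>"
  proof (rule injI)
    fix i i' assume "\<sigma> i = \<sigma> i'"
    then show "i = i'"
      using trop_mult_id_offdiag[OF G H GH, of i' i "\<sigma> i'"] G\<sigma>[of i'] H\<sigma>[of i] by auto
  qed
  moreover have "G = trop_monomial \<sigma> (\<lambda>i. real_of_ereal (G i (\<sigma> i)))"
  proof (intro ext)
    fix i j
    show "G i j = trop_monomial \<sigma> (\<lambda>i. real_of_ereal (G i (\<sigma> i))) i j"
    proof (cases "j = \<sigma> i")
      case True
      have "G i (\<sigma> i) \<noteq> \<infinity>"
        using G by (simp add: trop_mat_def trop_elem_def)
      then obtain r where "G i (\<sigma> i) = ereal r"
        using G\<sigma>[of i] by (cases "G i (\<sigma> i)") simp_all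
      then show ?thesis
        using True by (simp add: trop_monomial_def)
    next
      case False
      then have "G i j = -\<infinity>"
        using support by blast
      then show ?thesis
        using False by (simp add: trop_monomial_def)
    qed
  qed
  ultimately show thesis
    using that by blast
qed

lemma trop_mult_vec_monomial:
  assumes "\<And>k. x k \<noteq> \<infinity>"
  shows "trop_mult_vec (trop_monomial \<sigma> g) x i = ereal (g i) + x (\<sigma> i)"
  unfolding trop_mult_vec_def
proof (rule Max_range_eqI)
  show "trop_monomial \<sigma> g i (\<sigma> i) + x (\<sigma> i) = ereal (g i) + x (\<sigma> i)"
    by (simp add: trop_monomial_def)
  show "trop_monomial \<sigma> g i k + x k \<le> ereal (g i) + x (\<sigma> i)" for k
    using assms[of k] by (cases "k = \<sigma> i"; cases "x k") (simp_all add: trop_monomial_def)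
qed

lemma trop_mult_monomial_left:
  assumes "trop_mat A"
  shows "trop_mult (trop_monomial \<sigma> g) A i j = ereal (g i) + A (\<sigma> i) j"
proof -
  have "trop_mult (trop_monomial \<sigma> g) A i j = trop_mult_vec (trop_monomial \<sigma> g) (\<lambda>k. A k j) i"
    by (simp add: trop_mult_def trop_mult_vec_def)
  also have "\<dots> = ereal (g i) + A (\<sigma> i) j"
    using assms by (intro trop_mult_vec_monomial) (simp add: trop_mat_def trop_elem_def)
  finally show ?thesis .
qed

lemma trop_mult_monomial_right:
  assumes "inj \<sigma>" and "trop_mat A"
  shows "trop_mult A (trop_monomial \<sigma> g) i (\<sigma> j) = A i j + ereal (g j)"
  unfolding trop_mult_def
proof (rule Max_range_eqI)
  show "A i j + trop_monomial \<sigma> g j (\<sigma> j) = A i j + ereal (g j)"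
    by (simp add: trop_monomial_def)
  show "A i k + trop_monomial \<sigma> g k (\<sigma> j) \<le> A i j + ereal (g j)" for k
  proof (cases "k = j")
    case False
    then have "trop_monomial \<sigma> g k (\<sigma> j) = -\<infinity>"
      using assms(1) by (simp add: trop_monomial_def inj_eq)
    moreover have "A i k \<noteq> \<infinity>"
      using assms(2) by (simp add: trop_mat_def trop_elem_def)
    ultimately show ?thesis
      by (cases "A i k") simp_all
  qed (simp add: trop_monomial_def)
qed

lemma trop_monomial_commute_eq:
  assumes "inj \<sigma>"
    and "trop_mult (trop_monomial \<sigma> g) (\<lambda>i j. ereal (a i j)) =
         trop_mult (\<lambda>i j. ereal (a i j)) (trop_monomial \<sigma> g)"
  shows "g i + a (\<sigma> i) (\<sigma> j) = a i j + g j"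
proof -
  have a: "trop_mat (\<lambda>i j. ereal (a i j))"
    by (simp add: trop_mat_def trop_elem_def)
  have "ereal (g i) + ereal (a (\<sigma> i) (\<sigma> j)) = ereal (a i j) + ereal (g j)"
    using trop_mult_monomial_left[OF a, of \<sigma> g i "\<sigma> j"]
      trop_mult_monomial_right[OF assms(1) a, of g i j] assms(2) by simp
  then show ?thesis
    by simp
qed

definition orbit_sum :: "('n \<Rightarrow> 'n) \<Rightarrow> ('n \<Rightarrow> real) \<Rightarrow> 'n \<Rightarrow> nat \<Rightarrow> real" where
  "orbit_sum \<sigma> g i m = (\<Sum>t<m. g ((\<sigma> ^^ t) i))"

lemma orbit_sum_0 [simp]: "orbit_sum \<sigma> g i 0 = 0"
  by (simp add: orbit_sum_def)

lemma orbit_sum_Suc: "orbit_sum \<sigma> g i (Suc m) = orbit_sum \<sigma> g i m + g ((\<sigma> ^^ m) i)"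
  by (simp add: orbit_sum_def)

lemma orbit_sum_Suc_shift: "orbit_sum \<sigma> g i (Suc m) = g i + orbit_sum \<sigma> g (\<sigma> i) m"
  unfolding orbit_sum_def
  by (simp add: sum.lessThan_Suc_shift funpow_Suc_right del: sum.lessThan_Suc funpow.simps)

lemma orbit_sum_coboundary:
  assumes "\<And>i j. g i + a (\<sigma> i) (\<sigma> j) = a i j + g j"
  shows "a ((\<sigma> ^^ m) i) ((\<sigma> ^^ m) j) - a i j = orbit_sum \<sigma> g j m - orbit_sum \<sigma> g i m"
proof (induction m)
  case (Suc m)
  have "a ((\<sigma> ^^ Suc m) i) ((\<sigma> ^^ Suc m) j)
      = a ((\<sigma> ^^ m) i) ((\<sigma> ^^ m) j) + g ((\<sigma> ^^ m) j) - g ((\<sigma> ^^ m) i)"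
    using assms[of "(\<sigma> ^^ m) i" "(\<sigma> ^^ m) j"] by simp
  with Suc.IH show ?case
    by (simp add: orbit_sum_Suc)
qed simp

lemma orbit_sum_period_eq:
  assumes "\<sigma> ^^ N = id" and "\<And>i j. g i + a (\<sigma> i) (\<sigma> j) = a i j + g j"
  shows "orbit_sum \<sigma> g i N = orbit_sum \<sigma> g j N"
  using orbit_sum_coboundary[of g a \<sigma> N i j] assms by simp

lemma trop_eigenvalue_monomial_orbit_sum:
  assumes "\<sigma> ^^ N = id" and "trop_eigenvalue (trop_monomial \<sigma> g) c"
  obtains i where "real N * c = orbit_sum \<sigma> g i N"
proof -
  obtain x i where fin: "\<And>k. x k \<noteq> \<infinity>" and "x i \<noteq> -\<infinity>"
    and eig: "\<And>k. trop_mult_vec (trop_monomial \<sigma> g) x k = ereal c + x k"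
    using assms(2) unfolding trop_eigenvalue_def trop_elem_def by blast
  then obtain r where r: "x i = ereal r"
    by (cases "x i") simp_all
  have step: "ereal (g k) + x (\<sigma> k) = ereal c + x k" for k
    using eig[of k] trop_mult_vec_monomial[of x, OF fin] by simp
  have orbit: "x ((\<sigma> ^^ m) i) = ereal (r + m * c - orbit_sum \<sigma> g i m)" for m
  proof (induction m)
    case (Suc m)
    let ?k = "(\<sigma> ^^ m) i"
    have "ereal (g ?k) + x (\<sigma> ?k) = ereal (c + (r + m * c - orbit_sum \<sigma> g i m))"
      using step[of ?k] Suc.IH by simp
    then have "x (\<sigma> ?k) = ereal (c + (r + m * c - orbit_sum \<sigma> g i m) - g ?k)"
      using fin[of "\<sigma> ?k"] by (cases "x (\<sigma> ?k)") simp_all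
    then show ?case
      by (simp add: orbit_sum_Suc algebra_simps)
  qed (simp add: r)
  have "real N * c = orbit_sum \<sigma> g i N"
    using orbit[of N] r assms(1) by simp
  then show thesis
    by (rule that)
qed

lemma trop_eigenvalue_monomial_if_orbit_sums:
  assumes "\<sigma> ^^ N = id" and "N > 0" and sums: "\<And>i. orbit_sum \<sigma> g i N = real N * c"
  shows "trop_eigenvalue (trop_monomial \<sigma> g) c"
proof -
  \<comment> \<open>P m j is N-periodic in m by the hypothesis; averaging it over one period gives the eigenvector.\<close>
  define P where "P m j = orbit_sum \<sigma> g j m - real m * c" for m j
  define x where "x j = ereal ((\<Sum>m<N. P m j) / N)" for j
  have P_Suc: "P (Suc m) j = g j - c + P m (\<sigma> j)" for m j
    unfolding P_def by (simp add: orbit_sum_Suc_shift algebra_simps)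
  have P_shift_sum: "(\<Sum>m<N. P (Suc m) j) = (\<Sum>m<N. P m j)" for j
  proof -
    have "(\<Sum>m<N. P (Suc m) j) = (\<Sum>m<Suc N. P m j) - P 0 j"
      using sum.lessThan_Suc_shift[of "\<lambda>m. P m j" N] by (simp del: sum.lessThan_Suc)
    also have "\<dots> = (\<Sum>m<N. P m j)"
      using sums[of j] by (simp add: P_def)
    finally show ?thesis .
  qed
  have P_sum: "(\<Sum>m<N. P m (\<sigma> j)) = (\<Sum>m<N. P m j) - N * (g j - c)" for j
  proof -
    have "(\<Sum>m<N. P m (\<sigma> j)) = (\<Sum>m<N. P (Suc m) j - (g j - c))"
      by (simp add: P_Suc)
    also have "\<dots> = (\<Sum>m<N. P m j) - N * (g j - c)"
      by (simp add: sum_subtractf P_shift_sum)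
    finally show ?thesis .
  qed
  show ?thesis
    unfolding trop_eigenvalue_def
  proof (intro exI conjI allI)
    show "trop_elem (x i)" for i
      by (simp add: x_def trop_elem_def)
    show "x undefined \<noteq> -\<infinity>"
      by (simp add: x_def)
    show "trop_mult_vec (trop_monomial \<sigma> g) x j = ereal c + x j" for j
      using trop_mult_vec_monomial[of x \<sigma> g j] P_sum[of j] assms(2)
      by (simp add: x_def field_simps)
  qed
qed

theorem lemma7p6:
  fixes A G :: "'n::finite \<Rightarrow> 'n \<Rightarrow> ereal"
  assumes "ft_mat A" and "trop_unit G" and "trop_mult G A = trop_mult A G"
  shows "\<exists>!c::real. trop_eigenvalue G c"
proof -
  obtain \<sigma> g where "inj \<sigma>" and G: "G = trop_monomial \<sigma> g"
    using trop_unit_monomial[OF assms(2)] .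
  define a where "a i j = real_of_ereal (A i j)" for i j
  have "A = (\<lambda>i j. ereal (a i j))"
  proof (intro ext)
    fix i j
    show "A i j = ereal (a i j)"
      using assms(1) unfolding ft_mat_def a_def by (cases "A i j") auto
  qed
  then have comm: "g i + a (\<sigma> i) (\<sigma> j) = a i j + g j" for i j
    using trop_monomial_commute_eq[OF \<open>inj \<sigma>\<close>] assms(3) G by simp
  have "permutation \<sigma>"
    using \<open>inj \<sigma>\<close> by (simp add: permutation bij_def finite_UNIV_inj_surj)
  then obtain N where N: "\<sigma> ^^ N = id" "N > 0"
    by (rule permutation_is_nilpotent)
  define c where "c = orbit_sum \<sigma> g undefined N / N"
  have sums: "orbit_sum \<sigma> g i N = real N * c" for i
  proof -
    have "orbit_sum \<sigma> g i N = orbit_sum \<sigma> g undefined N"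
      using N(1) comm by (rule orbit_sum_period_eq)
    then show ?thesis
      using N(2) by (simp add: c_def)
  qed
  show ?thesis
  proof
    show "trop_eigenvalue G c"
      unfolding G using N sums by (rule trop_eigenvalue_monomial_if_orbit_sums)
    fix c' assume "trop_eigenvalue G c'"
    then obtain i where "real N * c' = orbit_sum \<sigma> g i N"
      unfolding G using N(1) trop_eigenvalue_monomial_orbit_sum by blast
    with sums[of i] N(2) show "c' = c"
      by simp
  qed
qed

end
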